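(* Assume: (i) there is $L_f>0$ with $\|f(w,t)-f(y,t)\|_2\le L_f\|w-y\|_2$ for all $w,y\in\mathbb{R}^{N_s}$, $t\in[0,T]$; (ii) $\Delta t<\sigma_{\min}(A_{LM})/(L_f\sigma_{\max}(B_{LM}))$; (iii) there is $P>0$ with $\|\bar A\,\bar r(w)\|_2\ge P\|\bar r(w)\|_2$ for all $w\in\mathcal{S}$. Let $x\in\mathbb{R}^{N_sN_t}$ satisfy $\bar r(x)=0$ and let $\tilde x\in\arg\min_{w\in\mathcal{S}}\|\bar A\,\bar r(w)\|_2$. Then $$\max_{1\le n\le N_t}\|x^n-\tilde x^n\|_2\le\frac{\sqrt{N_t}}{P}\,\frac{\sigma_{\max}(\bar A A_{LM})+\Delta t L_f\sigma_{\max}(\bar A B_{LM})}{\sigma_{\min}(A_{LM})-\Delta t L_f\sigma_{\max}(B_{LM})}\,\min_{w\in\mathcal{S}}\max_{1\le n\le N_t}\|x^n-w^n\|_2.$$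
   Context: Let $f:\mathbb{R}^{N_s}\times[0,T]\to\mathbb{R}^{N_s}$ be the velocity of the ODE $\dot x=f(x,t)$, $x(0)=x^0\in\mathbb{R}^{N_s}$. Use a uniform time grid $t^n=n\Delta t$, $n=0,\dots,N_t$, $\Delta t=T/N_t$. A linear multistep scheme is given by integers $k(n)\le n$ and coefficients $\alpha_j^n,\beta_j^n\in\mathbb{R}$, $j=0,\dots,k(n)$, $n=1,\dots,N_t$, with $\alpha_0^n\neq0$. For $w=(w^1,\dots,w^{N_t})\in\mathbb{R}^{N_sN_t}$ (blocks $w^n\in\mathbb{R}^{N_s}$) set $w^0:=x^0$ and define the residual at step $n$ by $r^n(w)=\sum_{j=0}^{k(n)}\alpha_j^n w^{n-j}-\Delta t\sum_{j=0}^{k(n)}\beta_j^n f(w^{n-j},t^{n-j})$, and the space–time residual $\bar r(w)=(r^1(w),\dots,r^{N_t}(w))\in\mathbb{R}^{N_sN_t}$. Let $A_{LM},B_{LM}\in\mathbb{R}^{N_sN_t\times N_sN_t}$ be the block lower-triangular matrices (blocks of size $N_s\times N_s$) whose $(n,n-j)$ block is $\alpha_j^n I_{N_s}$, resp. $\beta_j^n I_{N_s}$, for $0\le j\le k(n)$ with $n-j\ge1$, and zero otherwise. $\sigma_{\max}(M)$, $\sigma_{\min}(M)$ denote the largest and smallest singular values of $M$; $\|\cdot\|_2$ is the Euclidean norm on $\mathbb{R}^{N_sN_t}$. The space–time trial subspace is the affine subspace $\mathcal{S}=\{(x^0,\dots,x^0)+\sum_{i=1}^{n_{st}}c_i\pi_i: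 c\in\mathbb{R}^{n_{st}}\}\subseteq\mathbb{R}^{N_sN_t}$ for given vectors $\pi_1,\dots,\pi_{n_{st}}\in\mathbb{R}^{N_sN_t}$; $\bar A\in\mathbb{R}^{\bar z\times N_sN_t}$ is a weighting matrix. *)

theory Defs
  imports "Jordan_Normal_Form.Matrix"
begin

definition vnorm :: "real vec \<Rightarrow> real" where
  "vnorm v = sqrt (\<Sum>i<dim_vec v. (v $ i)^2)"

text \<open>Largest / smallest singular value, via the variational (Courant--Fischer)
  characterisation over unit vectors.  The smallest one is only used for square matrices.\<close>
definition sigma_max :: "real mat \<Rightarrow> real" where
  "sigma_max M = Sup {vnorm (M *\<^sub>v v) | v. dim_vec v = dim_col M \<and> vnorm v = 1}"

definition sigma_min :: "real mat \<Rightarrow> real" where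
  "sigma_min M = Inf {vnorm (M *\<^sub>v v) | v. dim_vec v = dim_col M \<and> vnorm v = 1}"

text \<open>Block n of a space-time vector w (blocks numbered 1..Nt, block 0 is the initial state).\<close>
definition blk :: "nat \<Rightarrow> real vec \<Rightarrow> real vec \<Rightarrow> nat \<Rightarrow> real vec" where
  "blk Ns x0 w n = (if n = 0 then x0 else vec Ns (\<lambda>i. w $ ((n - 1) * Ns + i)))"

definition lm_res ::
  "nat \<Rightarrow> real \<Rightarrow> (real vec \<Rightarrow> real \<Rightarrow> real vec) \<Rightarrow> real vec \<Rightarrow>
   (nat \<Rightarrow> nat) \<Rightarrow> (nat \<Rightarrow> nat \<Rightarrow> real) \<Rightarrow> (nat \<Rightarrow> nat \<Rightarrow> real) \<Rightarrow>
   real vec \<Rightarrow> nat \<Rightarrow> real vec" where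
  "lm_res Ns dt f x0 k \<alpha> \<beta> w n =
     vec Ns (\<lambda>i. (\<Sum>j\<in>{0..k n}. \<alpha> n j * (blk Ns x0 w (n - j) $ i))
               - dt * (\<Sum>j\<in>{0..k n}. \<beta> n j * (f (blk Ns x0 w (n - j)) (real (n - j) * dt) $ i)))"

definition st_res ::
  "nat \<Rightarrow> nat \<Rightarrow> real \<Rightarrow> (real vec \<Rightarrow> real \<Rightarrow> real vec) \<Rightarrow> real vec \<Rightarrow>
   (nat \<Rightarrow> nat) \<Rightarrow> (nat \<Rightarrow> nat \<Rightarrow> real) \<Rightarrow> (nat \<Rightarrow> nat \<Rightarrow> real) \<Rightarrow> real vec \<Rightarrow> real vec" where
  "st_res Ns Nt dt f x0 k \<alpha> \<beta> w =
     vec (Ns * Nt) (\<lambda>p. lm_res Ns dt f x0 k \<alpha> \<beta> w (p div Ns + 1) $ (p mod Ns))"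

text \<open>Block lower-triangular matrix whose (n, n-j) block is c n j * I (0 \<le> j \<le> k n, n-j \<ge> 1).\<close>
definition lm_mat :: "nat \<Rightarrow> nat \<Rightarrow> (nat \<Rightarrow> nat) \<Rightarrow> (nat \<Rightarrow> nat \<Rightarrow> real) \<Rightarrow> real mat" where
  "lm_mat Ns Nt k c = mat (Ns * Nt) (Ns * Nt) (\<lambda>(p, q).
      (let n = p div Ns + 1; m = q div Ns + 1 in
        if p mod Ns = q mod Ns \<and> m \<le> n \<and> n - m \<le> k n then c n (n - m) else 0))"

text \<open>Affine space-time trial subspace (x0,...,x0) + span{pi_1,...,pi_nst}.\<close>
definition trial_space :: "nat \<Rightarrow> nat \<Rightarrow> real vec \<Rightarrow> nat \<Rightarrow> (nat \<Rightarrow> real vec) \<Rightarrow> real vec set" where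
  "trial_space Ns Nt x0 nst \<pi> =
     {w. \<exists>c :: nat \<Rightarrow> real. w = vec (Ns * Nt) (\<lambda>p. x0 $ (p mod Ns) + (\<Sum>i\<in>{1..nst}. c i * (\<pi> i $ p)))}"

end

theory Submission
  imports Defs "HOL-Analysis.L2_Norm"
begin

text \<open>Let R be the space-time residual and F the stacked velocity
  (f(w^1, t^1), ..., f(w^Nt, t^Nt)). Since R(x) = 0, the residual of any w is
  R(w) = A_LM (w - x) - dt B_LM (F(w) - F(x)), and F is Lf-Lipschitz. Hence
  c |w - x| <= |R(w)| and |Abar R(w)| <= C |w - x|, with
  c = sigma_min(A_LM) - dt Lf sigma_max(B_LM) > 0 and
  C = sigma_max(Abar A_LM) + dt Lf sigma_max(Abar B_LM).
  Stability and minimality of xt then give, for every w in the trial space,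
  P c |xt - x| <= P |R(xt)| <= |Abar R(xt)| <= |Abar R(w)| <= C |w - x|.
  Comparing the Euclidean norm with the largest block norm costs the factor sqrt Nt.\<close>

lemma vnorm_eq_L2_set: "vnorm v = L2_set (\<lambda>i. v $ i) {..<dim_vec v}"
  unfolding vnorm_def L2_set_def by simp

lemma vnorm_nonneg [simp]: "0 \<le> vnorm v"
  unfolding vnorm_def by (simp add: sum_nonneg)

lemma vnorm_power2: "(vnorm v)\<^sup>2 = (\<Sum>i<dim_vec v. (v $ i)\<^sup>2)"
  unfolding vnorm_def by (simp add: sum_nonneg)

lemma vnorm_zero [simp]: "vnorm (0\<^sub>v n) = 0"
  unfolding vnorm_def by simp

lemma vnorm_eq_0_iff: "vnorm v = 0 \<longleftrightarrow> v = 0\<^sub>v (dim_vec v)"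
  unfolding vnorm_eq_L2_set L2_set_eq_0_iff[OF finite_lessThan] by (auto simp: vec_eq_iff)

lemma vnorm_smult: "vnorm (a \<cdot>\<^sub>v v) = \<bar>a\<bar> * vnorm v"
  unfolding vnorm_def by (simp add: power_mult_distrib sum_distrib_left[symmetric] real_sqrt_mult)

lemma vnorm_add_le:
  assumes "dim_vec u = dim_vec v"
  shows "vnorm (u + v) \<le> vnorm u + vnorm v"
proof -
  have "vnorm (u + v) = L2_set (\<lambda>i. u $ i + v $ i) {..<dim_vec v}"
    unfolding vnorm_eq_L2_set using assms by (intro L2_set_cong) auto
  then show ?thesis
    using L2_set_triangle_ineq assms unfolding vnorm_eq_L2_set by metis
qed

lemma vnorm_uminus [simp]: "vnorm (- v) = vnorm v"
  unfolding vnorm_def by simp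

lemma vnorm_diff_le:
  assumes "dim_vec u = dim_vec v"
  shows "vnorm (u - v) \<le> vnorm u + vnorm v"
proof -
  have "u - v = u + - v" using assms by auto
  then show ?thesis using vnorm_add_le[of u "- v"] assms by simp
qed

lemma vnorm_diff_ge:
  assumes "dim_vec u = dim_vec v"
  shows "vnorm u - vnorm v \<le> vnorm (u - v)"
proof -
  have "u = (u - v) + v" using assms by auto
  then show ?thesis using vnorm_add_le[of "u - v" v] assms by simp
qed

lemma vnorm_diff_commute:
  assumes "dim_vec u = dim_vec v"
  shows "vnorm (u - v) = vnorm (v - u)"
proof -
  have "v - u = - (u - v)" using assms by auto
  then show ?thesis by simp
qed

lemma vnorm_mult_mat_vec_le_frobenius:
  assumes "dim_vec v = dim_col M"
  shows "vnorm (M *\<^sub>v v) \<le> sqrt (\<Sum>i<dim_row M. \<Sum>j<dim_col M. (M $$ (i, j))\<^sup>2) * vnorm v"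
proof -
  have row: "((M *\<^sub>v v) $ i)\<^sup>2 \<le> (\<Sum>j<dim_col M. (M $$ (i, j))\<^sup>2) * (vnorm v)\<^sup>2"
    if "i < dim_row M" for i
  proof -
    have "\<bar>(M *\<^sub>v v) $ i\<bar> = \<bar>\<Sum>j<dim_col M. M $$ (i, j) * v $ j\<bar>"
      using that assms by (simp add: scalar_prod_def atLeast0LessThan)
    also have "\<dots> \<le> (\<Sum>j<dim_col M. \<bar>M $$ (i, j)\<bar> * \<bar>v $ j\<bar>)"
      unfolding abs_mult[symmetric] by (rule sum_abs)
    also have "\<dots> \<le> L2_set (\<lambda>j. M $$ (i, j)) {..<dim_col M} * vnorm v"
      unfolding vnorm_eq_L2_set assms by (rule L2_set_mult_ineq)
    finally have "\<bar>(M *\<^sub>v v) $ i\<bar>\<^sup>2 \<le> (L2_set (\<lambda>j. M $$ (i, j)) {..<dim_col M} * vnorm v)\<^sup>2"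
      by (intro power_mono) auto
    then show ?thesis unfolding L2_set_def by (simp add: power_mult_distrib sum_nonneg)
  qed
  have "(vnorm (M *\<^sub>v v))\<^sup>2 = (\<Sum>i<dim_row M. ((M *\<^sub>v v) $ i)\<^sup>2)"
    by (simp only: vnorm_power2 dim_mult_mat_vec)
  also have "\<dots> \<le> (\<Sum>i<dim_row M. (\<Sum>j<dim_col M. (M $$ (i, j))\<^sup>2) * (vnorm v)\<^sup>2)"
    using row by (intro sum_mono) simp
  also have "\<dots> = (sqrt (\<Sum>i<dim_row M. \<Sum>j<dim_col M. (M $$ (i, j))\<^sup>2) * vnorm v)\<^sup>2"
    by (simp add: power_mult_distrib sum_nonneg sum_distrib_right)
  finally show ?thesis by (rule power2_le_imp_le) (simp add: sum_nonneg)
qed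

lemma vnorm_mult_mat_vec_normalize:
  assumes "dim_vec v = dim_col M" and "vnorm v \<noteq> 0"
  shows "vnorm (M *\<^sub>v ((1 / vnorm v) \<cdot>\<^sub>v v)) = vnorm (M *\<^sub>v v) / vnorm v"
    and "vnorm ((1 / vnorm v) \<cdot>\<^sub>v v) = 1"
proof -
  have scale: "M *\<^sub>v ((1 / vnorm v) \<cdot>\<^sub>v v) = (1 / vnorm v) \<cdot>\<^sub>v (M *\<^sub>v v)"
    using assms(1) by (intro mult_mat_vec[where nc = "dim_col M"] carrier_matI carrier_vecI) simp_all
  show "vnorm (M *\<^sub>v ((1 / vnorm v) \<cdot>\<^sub>v v)) = vnorm (M *\<^sub>v v) / vnorm v"
    unfolding scale vnorm_smult by simp
  show "vnorm ((1 / vnorm v) \<cdot>\<^sub>v v) = 1"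
    using assms(2) unfolding vnorm_smult by simp
qed

lemma vnorm_mult_mat_vec_le_sigma_max:
  assumes "dim_vec v = dim_col M"
  shows "vnorm (M *\<^sub>v v) \<le> sigma_max M * vnorm v"
proof (cases "vnorm v = 0")
  case True
  then have "v = 0\<^sub>v (dim_col M)"
    using assms vnorm_eq_0_iff by metis
  then have "M *\<^sub>v v = 0\<^sub>v (dim_row M)"
    by (auto simp: scalar_prod_def)
  then show ?thesis using True by simp
next
  case False
  have "bdd_above {vnorm (M *\<^sub>v u) | u. dim_vec u = dim_col M \<and> vnorm u = 1}"
  proof (rule bdd_aboveI)
    fix y assume "y \<in> {vnorm (M *\<^sub>v u) | u. dim_vec u = dim_col M \<and> vnorm u = 1}"
    then obtain u where "y = vnorm (M *\<^sub>v u)" "dim_vec u = dim_col M" "vnorm u = 1" by blast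
    then show "y \<le> sqrt (\<Sum>i<dim_row M. \<Sum>j<dim_col M. (M $$ (i, j))\<^sup>2)"
      using vnorm_mult_mat_vec_le_frobenius[of u M] by simp
  qed
  then have "vnorm (M *\<^sub>v v) / vnorm v \<le> sigma_max M"
    unfolding sigma_max_def vnorm_mult_mat_vec_normalize(1)[OF assms False, symmetric]
    by (rule cSup_upper[rotated]) (use assms False vnorm_mult_mat_vec_normalize(2) in auto)
  moreover have "0 < vnorm v" using False vnorm_nonneg[of v] by linarith
  ultimately show ?thesis by (simp add: pos_divide_le_eq)
qed

lemma sigma_min_mult_le_vnorm_mult_mat_vec:
  assumes "dim_vec v = dim_col M"
  shows "sigma_min M * vnorm v \<le> vnorm (M *\<^sub>v v)"
proof (cases "vnorm v = 0")
  case False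
  have "bdd_below {vnorm (M *\<^sub>v u) | u. dim_vec u = dim_col M \<and> vnorm u = 1}"
    by (rule bdd_belowI[where m = 0]) auto
  then have "sigma_min M \<le> vnorm (M *\<^sub>v v) / vnorm v"
    unfolding sigma_min_def vnorm_mult_mat_vec_normalize(1)[OF assms False, symmetric]
    by (rule cInf_lower[rotated]) (use assms False vnorm_mult_mat_vec_normalize(2) in auto)
  moreover have "0 < vnorm v" using False vnorm_nonneg[of v] by linarith
  ultimately show ?thesis by (simp add: pos_le_divide_eq)
qed simp

lemma sigma_max_nonneg:
  assumes "0 < dim_col M"
  shows "0 \<le> sigma_max M"
proof -
  have "(\<Sum>i<dim_col M. (unit_vec (dim_col M) 0 $ i)\<^sup>2) = (\<Sum>i<dim_col M. if i = 0 then 1 else 0 :: real)"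
    by (intro sum.cong) auto
  then have "vnorm (unit_vec (dim_col M) 0) = 1"
    using assms by (simp add: vnorm_def)
  then have "vnorm (M *\<^sub>v unit_vec (dim_col M) 0) \<le> sigma_max M"
    using vnorm_mult_mat_vec_le_sigma_max[of "unit_vec (dim_col M) 0" M] by simp
  then show ?thesis
    using vnorm_nonneg order_trans by blast
qed

text \<open>Blocks of a space-time vector, with block 0 read as zero, so that the multistep sums
  need no guard on the step index.\<close>
abbreviation block :: "nat \<Rightarrow> real vec \<Rightarrow> nat \<Rightarrow> real vec" where
  "block Ns d \<equiv> blk Ns (0\<^sub>v Ns) d"

lemma block_index_less:
  fixes i n Ns Nt :: nat
  assumes "i < Ns" and "n \<in> {1..Nt}"
  shows "(n - 1) * Ns + i < Ns * Nt"
proof -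
  have "(n - 1) * Ns + i < (n - 1) * Ns + Ns" using assms by simp
  also have "\<dots> = n * Ns" using assms by (cases n) auto
  also have "\<dots> \<le> Ns * Nt" using assms(2) by (simp add: mult.commute)
  finally show ?thesis .
qed

lemma sum_blocks:
  fixes g :: "nat \<Rightarrow> 'a::comm_monoid_add"
  shows "(\<Sum>q<Ns * Nt. g q) = (\<Sum>n\<in>{1..Nt}. \<Sum>i<Ns. g ((n - 1) * Ns + i))"
proof -
  have "(\<Sum>q<Ns * Nt. g q) = (\<Sum>m<Nt. \<Sum>q\<in>{m * Ns..<m * Ns + Ns}. g q)"
    unfolding mult.commute[of Ns Nt] by (rule sum.nat_group[symmetric])
  also have "\<dots> = (\<Sum>m<Nt. \<Sum>i<Ns. g (m * Ns + i))"
    using sum.shift_bounds_nat_ivl[of g 0 "_ * Ns" Ns] by (simp add: atLeast0LessThan add.commute)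
  also have "\<dots> = (\<Sum>n\<in>{1..Nt}. \<Sum>i<Ns. g ((n - 1) * Ns + i))"
    by (simp add: sum.atLeast1_atMost_eq)
  finally show ?thesis .
qed

lemma eq_vec_blockwise:
  assumes "dim_vec u = Ns * Nt" and "dim_vec v = Ns * Nt"
    and "\<And>n i. n \<in> {1..Nt} \<Longrightarrow> i < Ns \<Longrightarrow> u $ ((n - 1) * Ns + i) = v $ ((n - 1) * Ns + i)"
  shows "u = v"
proof (rule eq_vecI)
  fix p assume "p < dim_vec v"
  then have p: "p < Ns * Nt" using assms(2) by simp
  then have "0 < Ns" by (cases Ns) auto
  then have "p div Ns + 1 \<in> {1..Nt}" and "p mod Ns < Ns"
    using p by (simp_all add: less_mult_imp_div_less mult.commute Suc_leI)
  then show "u $ p = v $ p"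
    using assms(3)[of "p div Ns + 1" "p mod Ns"] by simp
qed (use assms in simp)

lemma block_nth:
  assumes "n \<noteq> 0" and "i < Ns"
  shows "block Ns d n $ i = d $ ((n - 1) * Ns + i)"
  using assms by (simp add: blk_def)

lemma vnorm_power2_blocks:
  assumes "dim_vec d = Ns * Nt"
  shows "(vnorm d)\<^sup>2 = (\<Sum>n\<in>{1..Nt}. (vnorm (block Ns d n))\<^sup>2)"
proof -
  have "(vnorm (block Ns d n))\<^sup>2 = (\<Sum>i<Ns. (d $ ((n - 1) * Ns + i))\<^sup>2)" if "n \<in> {1..Nt}" for n
    using that by (simp add: vnorm_power2 blk_def)
  then show ?thesis
    unfolding vnorm_power2 assms sum_blocks[of _ Ns Nt] by simp
qed

lemma dim_blk [simp]: "dim_vec x0 = Ns \<Longrightarrow> dim_vec (blk Ns x0 w n) = Ns"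
  by (simp add: blk_def)

lemma blk_diff:
  assumes "dim_vec x0 = Ns" and "dim_vec w = Ns * Nt" and "dim_vec x = Ns * Nt" and "n \<le> Nt"
  shows "blk Ns x0 w n - blk Ns x0 x n = block Ns (w - x) n"
proof (cases "n = 0")
  case False
  then show ?thesis
    using assms block_index_less[of _ Ns n Nt] by (intro eq_vecI) (simp_all add: blk_def)
qed (use assms in \<open>intro eq_vecI, simp_all add: blk_def\<close>)

definition max_block_norm :: "nat \<Rightarrow> nat \<Rightarrow> real vec \<Rightarrow> real" where
  "max_block_norm Ns Nt d = Max ((\<lambda>n. vnorm (block Ns d n)) ` {1..Nt})"

lemma max_block_norm_le_vnorm:
  assumes "dim_vec d = Ns * Nt" and "1 \<le> Nt"
  shows "max_block_norm Ns Nt d \<le> vnorm d"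
  unfolding max_block_norm_def
proof (rule Max.boundedI)
  fix y assume "y \<in> (\<lambda>n. vnorm (block Ns d n)) ` {1..Nt}"
  then obtain n where n: "n \<in> {1..Nt}" and y: "y = vnorm (block Ns d n)" by blast
  have "y\<^sup>2 \<le> (\<Sum>m\<in>{1..Nt}. (vnorm (block Ns d m))\<^sup>2)"
    unfolding y using n by (intro member_le_sum) auto
  then show "y \<le> vnorm d"
    unfolding vnorm_power2_blocks[OF assms(1), symmetric] by (rule power2_le_imp_le) simp
qed (use assms in auto)

lemma vnorm_le_sqrt_max_block_norm:
  assumes "dim_vec d = Ns * Nt"
  shows "vnorm d \<le> sqrt (real Nt) * max_block_norm Ns Nt d"
proof (cases "Nt = 0")
  case False
  define m where "m = max_block_norm Ns Nt d"
  have le: "vnorm (block Ns d n) \<le> m" if "n \<in> {1..Nt}" for n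
    unfolding m_def max_block_norm_def using that by (intro Max_ge) auto
  have "vnorm (block Ns d 1) \<le> m"
    using False by (intro le) simp
  then have m_nonneg: "0 \<le> m"
    using vnorm_nonneg[of "block Ns d 1"] by linarith
  have "(vnorm d)\<^sup>2 \<le> (\<Sum>n\<in>{1..Nt}. m\<^sup>2)"
    unfolding vnorm_power2_blocks[OF assms] using le by (intro sum_mono power_mono) auto
  also have "\<dots> = (sqrt (real Nt) * m)\<^sup>2"
    by (simp add: power_mult_distrib)
  finally show ?thesis
    unfolding m_def[symmetric] by (rule power2_le_imp_le) (simp add: m_nonneg)
qed (use assms in \<open>simp add: vnorm_def\<close>)

lemma lm_mat_dim [simp]:
  "dim_row (lm_mat Ns Nt k c) = Ns * Nt" "dim_col (lm_mat Ns Nt k c) = Ns * Nt"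
  by (simp_all add: lm_mat_def)

lemma lm_mat_block_entry:
  assumes "n \<in> {1..Nt}" and "m \<in> {1..Nt}" and "i < Ns" and "i' < Ns"
  shows "lm_mat Ns Nt k c $$ ((n - 1) * Ns + i, (m - 1) * Ns + i') =
    (if i' = i \<and> m \<le> n \<and> n - m \<le> k n then c n (n - m) else 0)"
  using assms block_index_less[of i Ns n Nt] block_index_less[of i' Ns m Nt]
  by (auto simp: lm_mat_def Let_def)

lemma lm_mat_mult_vec_nth:
  assumes n: "n \<in> {1..Nt}" and i: "i < Ns" and d: "dim_vec d = Ns * Nt"
  shows "(lm_mat Ns Nt k c *\<^sub>v d) $ ((n - 1) * Ns + i) = (\<Sum>j\<in>{0..k n}. c n j * block Ns d (n - j) $ i)"
proof -
  let ?M = "lm_mat Ns Nt k c" and ?p = "(n - 1) * Ns + i"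
  have row_block: "(\<Sum>i'<Ns. ?M $$ (?p, (m - 1) * Ns + i') * d $ ((m - 1) * Ns + i')) =
      (if m \<le> n \<and> n - m \<le> k n then c n (n - m) * d $ ((m - 1) * Ns + i) else 0)"
    if m: "m \<in> {1..Nt}" for m
  proof -
    have "(\<Sum>i'<Ns. ?M $$ (?p, (m - 1) * Ns + i') * d $ ((m - 1) * Ns + i')) =
        (\<Sum>i'<Ns. if i' = i then (if m \<le> n \<and> n - m \<le> k n then c n (n - m) * d $ ((m - 1) * Ns + i) else 0) else 0)"
      using lm_mat_block_entry[OF n m i] by (intro sum.cong refl) simp
    then show ?thesis using i by simp
  qed
  have "(?M *\<^sub>v d) $ ?p = (\<Sum>q<Ns * Nt. ?M $$ (?p, q) * d $ q)"
    using block_index_less[OF i n] d by (simp add: scalar_prod_def atLeast0LessThan)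
  also have "\<dots> = (\<Sum>m\<in>{1..Nt}. \<Sum>i'<Ns. ?M $$ (?p, (m - 1) * Ns + i') * d $ ((m - 1) * Ns + i'))"
    by (rule sum_blocks)
  also have "\<dots> = (\<Sum>m\<in>{1..Nt}. if m \<le> n \<and> n - m \<le> k n then c n (n - m) * d $ ((m - 1) * Ns + i) else 0)"
    by (intro sum.cong refl) (rule row_block)
  also have "\<dots> = (\<Sum>m\<in>{m\<in>{1..Nt}. m \<le> n \<and> n - m \<le> k n}. c n (n - m) * d $ ((m - 1) * Ns + i))"
    by (rule sum.inter_filter[symmetric]) simp
  also have "\<dots> = (\<Sum>j\<in>{j\<in>{0..k n}. j < n}. c n j * block Ns d (n - j) $ i)"
    using n i by (intro sum.reindex_bij_witness[of _ "\<lambda>j. n - j" "\<lambda>m. n - m"]) (auto simp: block_nth)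
  also have "\<dots> = (\<Sum>j\<in>{0..k n}. c n j * block Ns d (n - j) $ i)"
    using i by (intro sum.mono_neutral_left) (auto simp: blk_def)
  finally show ?thesis .
qed

definition st_vel ::
  "nat \<Rightarrow> nat \<Rightarrow> real \<Rightarrow> (real vec \<Rightarrow> real \<Rightarrow> real vec) \<Rightarrow> real vec \<Rightarrow> real vec \<Rightarrow> real vec" where
  "st_vel Ns Nt dt f x0 w =
     vec (Ns * Nt) (\<lambda>p. f (blk Ns x0 w (p div Ns + 1)) (real (p div Ns + 1) * dt) $ (p mod Ns))"

lemma dim_st_vel [simp]: "dim_vec (st_vel Ns Nt dt f x0 w) = Ns * Nt"
  by (simp add: st_vel_def)

lemma block_st_vel_diff_nth:
  assumes "m \<le> Nt" and "i < Ns"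
  shows "block Ns (st_vel Ns Nt dt f x0 w - st_vel Ns Nt dt f x0 x) m $ i =
    f (blk Ns x0 w m) (real m * dt) $ i - f (blk Ns x0 x m) (real m * dt) $ i"
proof (cases "m = 0")
  case False
  then have "(m - 1) * Ns + i < Ns * Nt" and "((m - 1) * Ns + i) div Ns + 1 = m"
    using assms block_index_less[of i Ns m Nt] by simp_all
  then show ?thesis
    using False assms by (simp add: blk_def st_vel_def)
qed (use assms in \<open>simp add: blk_def\<close>)

lemma dim_st_res [simp]: "dim_vec (st_res Ns Nt dt f x0 k \<alpha> \<beta> w) = Ns * Nt"
  by (simp add: st_res_def)

lemma st_res_nth:
  assumes "n \<in> {1..Nt}" and "i < Ns"
  shows "st_res Ns Nt dt f x0 k \<alpha> \<beta> w $ ((n - 1) * Ns + i) = lm_res Ns dt f x0 k \<alpha> \<beta> w n $ i"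
  using assms block_index_less[OF assms(2,1)] by (simp add: st_res_def)

lemma st_res_diff:
  assumes x0: "dim_vec x0 = Ns" and w: "dim_vec w = Ns * Nt" and x: "dim_vec x = Ns * Nt"
  shows "st_res Ns Nt dt f x0 k \<alpha> \<beta> w - st_res Ns Nt dt f x0 k \<alpha> \<beta> x =
    lm_mat Ns Nt k \<alpha> *\<^sub>v (w - x)
    - dt \<cdot>\<^sub>v (lm_mat Ns Nt k \<beta> *\<^sub>v (st_vel Ns Nt dt f x0 w - st_vel Ns Nt dt f x0 x))"
proof (rule eq_vec_blockwise[where Ns = Ns and Nt = Nt])
  fix n i assume n: "n \<in> {1..Nt}" and i: "i < Ns"
  let ?p = "(n - 1) * Ns + i"
  let ?fw = "\<lambda>m. f (blk Ns x0 w m) (real m * dt) $ i" and ?fx = "\<lambda>m. f (blk Ns x0 x m) (real m * dt) $ i"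
  have p: "?p < Ns * Nt" by (rule block_index_less[OF i n])
  have "(st_res Ns Nt dt f x0 k \<alpha> \<beta> w - st_res Ns Nt dt f x0 k \<alpha> \<beta> x) $ ?p =
      lm_res Ns dt f x0 k \<alpha> \<beta> w n $ i - lm_res Ns dt f x0 k \<alpha> \<beta> x n $ i"
    using p st_res_nth[OF n i] by simp
  also have "\<dots> = (\<Sum>j\<in>{0..k n}. \<alpha> n j * (blk Ns x0 w (n - j) $ i - blk Ns x0 x (n - j) $ i))
      - dt * (\<Sum>j\<in>{0..k n}. \<beta> n j * (?fw (n - j) - ?fx (n - j)))"
    using i by (simp add: lm_res_def sum_subtractf right_diff_distrib)
  also have "\<dots> = (\<Sum>j\<in>{0..k n}. \<alpha> n j * block Ns (w - x) (n - j) $ i)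
      - dt * (\<Sum>j\<in>{0..k n}. \<beta> n j * block Ns (st_vel Ns Nt dt f x0 w - st_vel Ns Nt dt f x0 x) (n - j) $ i)"
  proof -
    have le: "n - j \<le> Nt" for j using n by auto
    have "blk Ns x0 w (n - j) $ i - blk Ns x0 x (n - j) $ i = block Ns (w - x) (n - j) $ i" for j
      using blk_diff[OF x0 w x le] i x0 by (metis dim_blk index_minus_vec(1))
    moreover have "?fw (n - j) - ?fx (n - j) =
        block Ns (st_vel Ns Nt dt f x0 w - st_vel Ns Nt dt f x0 x) (n - j) $ i" for j
      using block_st_vel_diff_nth[OF le i] by simp
    ultimately show ?thesis by simp
  qed
  also have "\<dots> = (lm_mat Ns Nt k \<alpha> *\<^sub>v (w - x)
      - dt \<cdot>\<^sub>v (lm_mat Ns Nt k \<beta> *\<^sub>v (st_vel Ns Nt dt f x0 w - st_vel Ns Nt dt f x0 x))) $ ?p"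
    using p x lm_mat_mult_vec_nth[OF n i, of "w - x"]
      lm_mat_mult_vec_nth[OF n i, of "st_vel Ns Nt dt f x0 w - st_vel Ns Nt dt f x0 x"] by simp
  finally show "(st_res Ns Nt dt f x0 k \<alpha> \<beta> w - st_res Ns Nt dt f x0 k \<alpha> \<beta> x) $ ?p = \<dots>" .
qed (use w in simp_all)

lemma vnorm_st_vel_diff_le:
  assumes x0: "dim_vec x0 = Ns" and w: "dim_vec w = Ns * Nt" and x: "dim_vec x = Ns * Nt"
    and Lf: "0 \<le> Lf"
    and f_dim: "\<And>n v. n \<in> {1..Nt} \<Longrightarrow> dim_vec v = Ns \<Longrightarrow> dim_vec (f v (real n * dt)) = Ns"
    and lipschitz: "\<And>n v u. n \<in> {1..Nt} \<Longrightarrow> dim_vec v = Ns \<Longrightarrow> dim_vec u = Ns \<Longrightarrow>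
      vnorm (f v (real n * dt) - f u (real n * dt)) \<le> Lf * vnorm (v - u)"
  shows "vnorm (st_vel Ns Nt dt f x0 w - st_vel Ns Nt dt f x0 x) \<le> Lf * vnorm (w - x)"
proof -
  let ?D = "st_vel Ns Nt dt f x0 w - st_vel Ns Nt dt f x0 x"
  have blockwise: "vnorm (block Ns ?D n) \<le> Lf * vnorm (block Ns (w - x) n)" if n: "n \<in> {1..Nt}" for n
  proof -
    have "block Ns ?D n = f (blk Ns x0 w n) (real n * dt) - f (blk Ns x0 x n) (real n * dt)"
      using n x0 f_dim[OF n] block_st_vel_diff_nth[of n Nt _ Ns dt f x0 w x]
      by (intro eq_vecI) (auto simp: blk_def)
    moreover have "vnorm (f (blk Ns x0 w n) (real n * dt) - f (blk Ns x0 x n) (real n * dt))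
        \<le> Lf * vnorm (blk Ns x0 w n - blk Ns x0 x n)"
      using x0 by (intro lipschitz[OF n]) simp_all
    ultimately show ?thesis
      using blk_diff[OF x0 w x] n by simp
  qed
  have "(vnorm ?D)\<^sup>2 = (\<Sum>n\<in>{1..Nt}. (vnorm (block Ns ?D n))\<^sup>2)"
    by (rule vnorm_power2_blocks) simp
  also have "\<dots> \<le> (\<Sum>n\<in>{1..Nt}. (Lf * vnorm (block Ns (w - x) n))\<^sup>2)"
    using blockwise by (intro sum_mono power_mono) auto
  also have "\<dots> = (Lf * vnorm (w - x))\<^sup>2"
    using x by (simp add: vnorm_power2_blocks power_mult_distrib sum_distrib_left)
  finally show ?thesis
    by (rule power2_le_imp_le) (simp add: Lf)
qed

lemma vnorm_diff_scaled_lower_bound: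
  assumes d: "dim_vec d = dim_col A" and e: "dim_vec e = dim_col B" and "dim_row B = dim_row A"
    and "0 < dim_col B" and e_le: "vnorm e \<le> L * vnorm d" and dt: "0 \<le> dt"
  shows "(sigma_min A - dt * L * sigma_max B) * vnorm d \<le> vnorm (A *\<^sub>v d - dt \<cdot>\<^sub>v (B *\<^sub>v e))"
proof -
  have "vnorm (B *\<^sub>v e) \<le> sigma_max B * (L * vnorm d)"
    using vnorm_mult_mat_vec_le_sigma_max[OF e]
      mult_left_mono[OF e_le sigma_max_nonneg[OF \<open>0 < dim_col B\<close>]] by linarith
  then have "dt * vnorm (B *\<^sub>v e) \<le> dt * (sigma_max B * (L * vnorm d))"
    using dt by (rule mult_left_mono)
  then have "(sigma_min A - dt * L * sigma_max B) * vnorm d \<le> vnorm (A *\<^sub>v d) - vnorm (dt \<cdot>\<^sub>v (B *\<^sub>v e))"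
    using sigma_min_mult_le_vnorm_mult_mat_vec[OF d] dt by (simp add: vnorm_smult algebra_simps)
  also have "\<dots> \<le> vnorm (A *\<^sub>v d - dt \<cdot>\<^sub>v (B *\<^sub>v e))"
    by (rule vnorm_diff_ge) (simp add: assms(3))
  finally show ?thesis .
qed

lemma vnorm_mult_diff_scaled_upper_bound:
  assumes d: "dim_vec d = dim_col A" and e: "dim_vec e = dim_col B"
    and A: "dim_row A = dim_col M" and B: "dim_row B = dim_col M"
    and "0 < dim_col B" and e_le: "vnorm e \<le> L * vnorm d" and dt: "0 \<le> dt"
  shows "vnorm (M *\<^sub>v (A *\<^sub>v d - dt \<cdot>\<^sub>v (B *\<^sub>v e)))
    \<le> (sigma_max (M * A) + dt * L * sigma_max (M * B)) * vnorm d"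
proof -
  have M: "M \<in> carrier_mat (dim_row M) (dim_col M)" by simp
  have A': "A \<in> carrier_mat (dim_col M) (dim_col A)" and B': "B \<in> carrier_mat (dim_col M) (dim_col B)"
    using A B by (auto intro!: carrier_matI)
  have d': "d \<in> carrier_vec (dim_col A)" and e': "e \<in> carrier_vec (dim_col B)"
    using d e by (auto intro!: carrier_vecI)
  have "M *\<^sub>v (A *\<^sub>v d - dt \<cdot>\<^sub>v (B *\<^sub>v e)) = M *\<^sub>v (A *\<^sub>v d) - M *\<^sub>v (dt \<cdot>\<^sub>v (B *\<^sub>v e))"
    using A' B' d' e' by (intro mult_minus_distrib_mat_vec[OF M] smult_carrier_vec[THEN iffD2] mult_mat_vec_carrier)
  also have "\<dots> = (M * A) *\<^sub>v d - dt \<cdot>\<^sub>v ((M * B) *\<^sub>v e)"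
    unfolding assoc_mult_mat_vec[OF M A' d'] assoc_mult_mat_vec[OF M B' e']
      mult_mat_vec[OF M mult_mat_vec_carrier[OF B' e']] ..
  also have "vnorm \<dots> \<le> vnorm ((M * A) *\<^sub>v d) + vnorm (dt \<cdot>\<^sub>v ((M * B) *\<^sub>v e))"
    by (rule vnorm_diff_le) simp
  also have "\<dots> = vnorm ((M * A) *\<^sub>v d) + dt * vnorm ((M * B) *\<^sub>v e)"
    using dt by (simp add: vnorm_smult)
  also have "\<dots> \<le> sigma_max (M * A) * vnorm d + dt * (sigma_max (M * B) * (L * vnorm d))"
  proof (intro add_mono mult_left_mono dt)
    show "vnorm ((M * A) *\<^sub>v d) \<le> sigma_max (M * A) * vnorm d"
      using d by (intro vnorm_mult_mat_vec_le_sigma_max) simp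
    show "vnorm ((M * B) *\<^sub>v e) \<le> sigma_max (M * B) * (L * vnorm d)"
    proof -
      have "vnorm ((M * B) *\<^sub>v e) \<le> sigma_max (M * B) * vnorm e"
        using e by (intro vnorm_mult_mat_vec_le_sigma_max) simp
      moreover have "0 \<le> sigma_max (M * B)"
        using \<open>0 < dim_col B\<close> by (intro sigma_max_nonneg) simp
      ultimately show ?thesis
        using mult_left_mono[OF e_le] by (meson order_trans)
    qed
  qed
  also have "\<dots> = (sigma_max (M * A) + dt * L * sigma_max (M * B)) * vnorm d"
    by (simp add: algebra_simps)
  finally show ?thesis .
qed

lemma minimal_residual_quasi_optimal:
  fixes R :: "real vec \<Rightarrow> real vec"
  assumes lower: "\<And>w. w \<in> S \<Longrightarrow> c * vnorm (w - x) \<le> vnorm (R w)"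
    and upper: "\<And>w. w \<in> S \<Longrightarrow> vnorm (M *\<^sub>v R w) \<le> C * vnorm (w - x)"
    and stable: "\<And>w. w \<in> S \<Longrightarrow> P * vnorm (R w) \<le> vnorm (M *\<^sub>v R w)"
    and xt: "xt \<in> S" and minimal: "\<And>w. w \<in> S \<Longrightarrow> vnorm (M *\<^sub>v R xt) \<le> vnorm (M *\<^sub>v R w)"
    and P: "0 < P" and c: "0 < c" and w: "w \<in> S"
  shows "vnorm (xt - x) \<le> C / (P * c) * vnorm (w - x)"
proof -
  have "(P * c) * vnorm (xt - x) \<le> P * vnorm (R xt)"
    using lower[OF xt] P by (simp add: mult.assoc)
  also have "\<dots> \<le> vnorm (M *\<^sub>v R xt)" by (rule stable[OF xt])
  also have "\<dots> \<le> vnorm (M *\<^sub>v R w)" by (rule minimal[OF w])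
  also have "\<dots> \<le> C * vnorm (w - x)" by (rule upper[OF w])
  finally show ?thesis
    using P c by (simp add: pos_le_divide_eq mult.commute)
qed

lemma le_mult_INF:
  fixes g :: "'a \<Rightarrow> real"
  assumes "S \<noteq> {}" and "0 \<le> K" and "\<And>w. w \<in> S \<Longrightarrow> a \<le> K * g w"
  shows "a \<le> K * (INF w\<in>S. g w)"
proof (cases "K = 0")
  case False
  then have K: "0 < K" using assms(2) by simp
  have "a / K \<le> (INF w\<in>S. g w)"
    using assms(1,3) K by (intro cINF_greatest) (auto simp: pos_divide_le_eq mult.commute)
  then show ?thesis using K by (simp add: pos_divide_le_eq mult.commute)
qed (use assms in auto)

lemma st_res_error_bounds:
  assumes x0: "dim_vec x0 = Ns" and N: "0 < Ns * Nt"
    and w: "dim_vec w = Ns * Nt" and x: "dim_vec x = Ns * Nt"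
    and x_sol: "st_res Ns Nt dt f x0 k \<alpha> \<beta> x = 0\<^sub>v (Ns * Nt)"
    and Lf: "0 \<le> Lf" and dt: "0 \<le> dt" and M: "dim_col M = Ns * Nt"
    and f_dim: "\<And>n v. n \<in> {1..Nt} \<Longrightarrow> dim_vec v = Ns \<Longrightarrow> dim_vec (f v (real n * dt)) = Ns"
    and lipschitz: "\<And>n v u. n \<in> {1..Nt} \<Longrightarrow> dim_vec v = Ns \<Longrightarrow> dim_vec u = Ns \<Longrightarrow>
      vnorm (f v (real n * dt) - f u (real n * dt)) \<le> Lf * vnorm (v - u)"
  shows "(sigma_min (lm_mat Ns Nt k \<alpha>) - dt * Lf * sigma_max (lm_mat Ns Nt k \<beta>)) * vnorm (w - x)
      \<le> vnorm (st_res Ns Nt dt f x0 k \<alpha> \<beta> w)"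
    and "vnorm (M *\<^sub>v st_res Ns Nt dt f x0 k \<alpha> \<beta> w)
      \<le> (sigma_max (M * lm_mat Ns Nt k \<alpha>) + dt * Lf * sigma_max (M * lm_mat Ns Nt k \<beta>)) * vnorm (w - x)"
proof -
  let ?F = "st_vel Ns Nt dt f x0"
  have residual: "st_res Ns Nt dt f x0 k \<alpha> \<beta> w
      = lm_mat Ns Nt k \<alpha> *\<^sub>v (w - x) - dt \<cdot>\<^sub>v (lm_mat Ns Nt k \<beta> *\<^sub>v (?F w - ?F x))"
    using st_res_diff[OF x0 w x, of dt f k \<alpha> \<beta>] x_sol
      minus_zero_vec[OF carrier_vecI[OF dim_st_res]] by simp
  have velocity: "vnorm (?F w - ?F x) \<le> Lf * vnorm (w - x)"
    by (rule vnorm_st_vel_diff_le[where f = f and dt = dt, OF x0 w x Lf f_dim lipschitz])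
  show "(sigma_min (lm_mat Ns Nt k \<alpha>) - dt * Lf * sigma_max (lm_mat Ns Nt k \<beta>)) * vnorm (w - x)
      \<le> vnorm (st_res Ns Nt dt f x0 k \<alpha> \<beta> w)"
    unfolding residual using N w x velocity dt by (intro vnorm_diff_scaled_lower_bound) simp_all
  show "vnorm (M *\<^sub>v st_res Ns Nt dt f x0 k \<alpha> \<beta> w)
      \<le> (sigma_max (M * lm_mat Ns Nt k \<alpha>) + dt * Lf * sigma_max (M * lm_mat Ns Nt k \<beta>)) * vnorm (w - x)"
    unfolding residual using N w x velocity dt M by (intro vnorm_mult_diff_scaled_upper_bound) simp_all
qed

lemma max_block_norm_diff_le:
  assumes x: "dim_vec x = Ns * Nt" and xt: "dim_vec xt = Ns * Nt" and w: "dim_vec w = Ns * Nt"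
    and "1 \<le> Nt" and K: "0 \<le> K" and err: "vnorm (xt - x) \<le> K * vnorm (w - x)"
  shows "max_block_norm Ns Nt (x - xt) \<le> sqrt (real Nt) * K * max_block_norm Ns Nt (x - w)"
proof -
  have "max_block_norm Ns Nt (x - xt) \<le> vnorm (xt - x)"
    using max_block_norm_le_vnorm[of "x - xt" Ns Nt] x xt \<open>1 \<le> Nt\<close> by (simp add: vnorm_diff_commute)
  also have "\<dots> \<le> K * vnorm (x - w)"
    using err x w by (simp add: vnorm_diff_commute)
  also have "\<dots> \<le> K * (sqrt (real Nt) * max_block_norm Ns Nt (x - w))"
    using K x w by (intro mult_left_mono vnorm_le_sqrt_max_block_norm) simp_all
  finally show ?thesis by (simp add: mult_ac)
qed

theorem mainTheorem4:
  fixes Ns Nt nst :: nat and T Lf P :: real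
    and f :: "real vec \<Rightarrow> real \<Rightarrow> real vec" and x0 :: "real vec"
    and k :: "nat \<Rightarrow> nat" and \<alpha> \<beta> :: "nat \<Rightarrow> nat \<Rightarrow> real"
    and \<pi> :: "nat \<Rightarrow> real vec" and Abar :: "real mat"
    and x xt :: "real vec"
  defines "dt \<equiv> T / real Nt"
  assumes Ns_pos: "Ns \<ge> 1" and Nt_pos: "Nt \<ge> 1" and T_pos: "T > 0"
    and x0_dim: "dim_vec x0 = Ns"
    and f_dim: "\<And>w t. dim_vec w = Ns \<Longrightarrow> t \<in> {0..T} \<Longrightarrow> dim_vec (f w t) = Ns"
    and scheme: "\<And>n. n \<in> {1..Nt} \<Longrightarrow> k n \<le> n \<and> \<alpha> n 0 \<noteq> 0"
    and pi_dim: "\<And>i. i \<in> {1..nst} \<Longrightarrow> dim_vec (\<pi> i) = Ns * Nt"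
    and Abar_dim: "dim_col Abar = Ns * Nt"
    and Lf_pos: "Lf > 0"
    and lipschitz: "\<And>w y t. dim_vec w = Ns \<Longrightarrow> dim_vec y = Ns \<Longrightarrow> t \<in> {0..T} \<Longrightarrow>
                      vnorm (f w t - f y t) \<le> Lf * vnorm (w - y)"
    and dt_small: "dt * Lf * sigma_max (lm_mat Ns Nt k \<beta>) < sigma_min (lm_mat Ns Nt k \<alpha>)"
    and P_pos: "P > 0"
    and stab: "\<And>w. w \<in> trial_space Ns Nt x0 nst \<pi> \<Longrightarrow>
                 vnorm (Abar *\<^sub>v st_res Ns Nt dt f x0 k \<alpha> \<beta> w) \<ge> P * vnorm (st_res Ns Nt dt f x0 k \<alpha> \<beta> w)"
    and x_dim: "dim_vec x = Ns * Nt"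
    and x_sol: "st_res Ns Nt dt f x0 k \<alpha> \<beta> x = 0\<^sub>v (Ns * Nt)"
    and xt_in: "xt \<in> trial_space Ns Nt x0 nst \<pi>"
    and xt_min: "\<And>w. w \<in> trial_space Ns Nt x0 nst \<pi> \<Longrightarrow>
                   vnorm (Abar *\<^sub>v st_res Ns Nt dt f x0 k \<alpha> \<beta> xt)
                   \<le> vnorm (Abar *\<^sub>v st_res Ns Nt dt f x0 k \<alpha> \<beta> w)"
  shows "Max ((\<lambda>n. vnorm (blk Ns x0 x n - blk Ns x0 xt n)) ` {1..Nt})
         \<le> sqrt (real Nt) / P
           * ((sigma_max (Abar * lm_mat Ns Nt k \<alpha>) + dt * Lf * sigma_max (Abar * lm_mat Ns Nt k \<beta>))
              / (sigma_min (lm_mat Ns Nt k \<alpha>) - dt * Lf * sigma_max (lm_mat Ns Nt k \<beta>)))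
           * (INF w\<in>trial_space Ns Nt x0 nst \<pi>.
                Max ((\<lambda>n. vnorm (blk Ns x0 x n - blk Ns x0 w n)) ` {1..Nt}))"
proof -
  let ?S = "trial_space Ns Nt x0 nst \<pi>"
  define c where "c = sigma_min (lm_mat Ns Nt k \<alpha>) - dt * Lf * sigma_max (lm_mat Ns Nt k \<beta>)"
  define C where "C = sigma_max (Abar * lm_mat Ns Nt k \<alpha>) + dt * Lf * sigma_max (Abar * lm_mat Ns Nt k \<beta>)"
  have N_pos: "0 < Ns * Nt" and dt: "0 \<le> dt" and c_pos: "0 < c"
    using Ns_pos Nt_pos T_pos dt_small by (simp_all add: dt_def c_def)
  have C_nonneg: "0 \<le> C"
    unfolding C_def using N_pos dt Lf_pos by (simp add: sigma_max_nonneg)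
  have grid: "real n * dt \<in> {0..T}" if "n \<in> {1..Nt}" for n
    using that T_pos by (simp add: dt_def field_simps)
  have dim_S: "dim_vec w = Ns * Nt" if "w \<in> ?S" for w
    using that by (auto simp: trial_space_def)
  note bounds = st_res_error_bounds[OF x0_dim N_pos dim_S x_dim x_sol _ dt Abar_dim]
  have quasi_optimal: "vnorm (xt - x) \<le> C / (P * c) * vnorm (w - x)" if "w \<in> ?S" for w
    using stab xt_in xt_min P_pos c_pos that Lf_pos f_dim lipschitz grid
    unfolding c_def C_def
    by (intro minimal_residual_quasi_optimal[where R = "st_res Ns Nt dt f x0 k \<alpha> \<beta>" and M = Abar]
        bounds) auto
  have "max_block_norm Ns Nt (x - xt) \<le> sqrt (real Nt) / P * (C / c) * max_block_norm Ns Nt (x - w)"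
    if "w \<in> ?S" for w
    using max_block_norm_diff_le[OF x_dim dim_S[OF xt_in] dim_S[OF that] Nt_pos _ quasi_optimal[OF that]]
      C_nonneg P_pos c_pos by (simp add: mult_ac)
  moreover have "Max ((\<lambda>n. vnorm (blk Ns x0 x n - blk Ns x0 w n)) ` {1..Nt}) = max_block_norm Ns Nt (x - w)"
    if "dim_vec w = Ns * Nt" for w
    unfolding max_block_norm_def using blk_diff[OF x0_dim x_dim that] by simp
  ultimately show ?thesis
    unfolding C_def[symmetric] c_def[symmetric] using xt_in C_nonneg c_pos P_pos dim_S
    by (intro le_mult_INF) auto
qed

end
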